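(* Let $B$ be a real Banach space with norm $|\cdot|$, and $H$ a real Hilbert space that is a dense linear subspace of $B$ such that the inclusion map $H\to B$ is continuous. Then: (i) If $L$ is a closed codimension-one subspace of $B$, then there is a unique closed codimension-one subspace $M$ of $H$ whose closure in $B$ is $L$; namely $M=L\cap H$. (ii) Let $f_0\in H^*$ be nonzero. If $f_0$ is continuous with respect to $|\cdot|$, then the closure of $\ker f_0$ in $B$ is a codimension-one subspace of $B$; if $f_0$ is not continuous with respect to $|\cdot|$, then $\ker f_0$ is dense in $B$.
   Context: Here $H^*$ is the space of continuous linear functionals on $H$ with respect to the Hilbert norm; "continuous with respect to $|\cdot|$" means continuous for the restriction to $H$ of the Banach norm of $B$. *)

theory Defs
  imports "HOL-Analysis.Analysis"
begin

definition codim_one :: "'a::real_vector set \<Rightarrow> bool" where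
  "codim_one S \<longleftrightarrow> subspace S \<and> (\<exists>v. v \<notin> S \<and> span (insert v S) = UNIV)"

end

theory Submission
  imports Defs
begin

(*
  A closed hyperplane of B is the kernel of a bounded functional g, and if g (i u) = 1 the
  projection x \<mapsto> x - g x \<cdot> i u is continuous and maps the dense set i(H) into the image of
  ker (g \<circ> i); hence that image is dense in ker g. This gives (i), uniqueness holding because
  codimension-one subspaces are maximal proper subspaces. For (ii), a |\<cdot>|-continuous f0 is
  |\<cdot>|-bounded, so it extends to a bounded functional F on B and the closure of i(ker f0) is
  ker F. Conversely, if f0 u = 1 and i u has positive distance d from the closure K of
  i(ker f0), then |f0 h| d \<le> |i h|, so f0 is |\<cdot>|-continuous; for a discontinuous f0 therefore
  i u \<in> K, and the subspace K contains i(H) and is all of B.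
*)

lemma codim_one_decompose:
  assumes "codim_one S" "w \<notin> S"
  obtains t where "x - t *\<^sub>R w \<in> S"
proof -
  obtain v where S: "subspace S" "v \<notin> S" "span (insert v S) = UNIV"
    using assms unfolding codim_one_def by auto
  have along_v: "\<exists>k. y - k *\<^sub>R v \<in> S" for y
  proof -
    have "y \<in> span (insert v S)" by (simp add: S(3))
    then show ?thesis by (simp add: span_insert span_eq_iff[THEN iffD2, OF S(1)])
  qed
  obtain k where k: "w - k *\<^sub>R v \<in> S" using along_v by blast
  obtain k' where k': "x - k' *\<^sub>R v \<in> S" using along_v by blast
  have "k \<noteq> 0" using k assms(2) by auto
  have "(x - k' *\<^sub>R v) - (k'/k) *\<^sub>R (w - k *\<^sub>R v) \<in> S"
    using k k' S(1) by (simp add: subspace_diff subspace_scale)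
  moreover have "(x - k' *\<^sub>R v) - (k'/k) *\<^sub>R (w - k *\<^sub>R v) = x - (k'/k) *\<^sub>R w"
    using \<open>k \<noteq> 0\<close> by (simp add: algebra_simps)
  ultimately show ?thesis using that by metis
qed

lemma codim_one_kernel:
  fixes f :: "'a::real_vector \<Rightarrow> real"
  assumes "linear f" "f w \<noteq> 0"
  shows "codim_one {x. f x = 0}"
proof -
  let ?K = "{x. f x = 0}"
  have sub: "subspace ?K" using assms(1) by (rule linear_subspace_kernel)
  have "x - (f x / f w) *\<^sub>R w \<in> ?K" for x
    using assms by (simp add: linear_diff linear_scale)
  then have "span (insert w ?K) = UNIV"
    by (auto simp: span_insert span_eq_iff[THEN iffD2, OF sub])
  with sub assms(2) show ?thesis unfolding codim_one_def by blast
qed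

lemma codim_one_maximal:
  assumes "codim_one M" "subspace N" "M \<subseteq> N" "N \<noteq> UNIV"
  shows "M = N"
proof (rule ccontr)
  assume "M \<noteq> N"
  then obtain n where n: "n \<in> N" "n \<notin> M" using assms(3) by blast
  have "x \<in> N" for x
  proof -
    obtain t where "x - t *\<^sub>R n \<in> M" using codim_one_decompose[OF assms(1) n(2)] .
    then have "(x - t *\<^sub>R n) + t *\<^sub>R n \<in> N"
      using n(1) assms(2,3) by (meson subsetD subspace_add subspace_scale)
    then show ?thesis by simp
  qed
  then show False using assms(4) by blast
qed

lemma codim_one_eq_kernel:
  fixes S :: "'a::real_vector set"
  assumes "codim_one S" "w \<notin> S"
  obtains f :: "'a \<Rightarrow> real" where "linear f" "f w = 1" "S = {x. f x = 0}"
proof -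
  have sub: "subspace S" using assms(1) unfolding codim_one_def by blast
  have unique: "t = t'" if "x - t *\<^sub>R w \<in> S" "x - t' *\<^sub>R w \<in> S" for x t t'
  proof (rule ccontr)
    assume "t \<noteq> t'"
    have "(1 / (t' - t)) *\<^sub>R ((x - t *\<^sub>R w) - (x - t' *\<^sub>R w)) \<in> S"
      using subspace_scale[OF sub subspace_diff[OF sub that]] .
    moreover have "(x - t *\<^sub>R w) - (x - t' *\<^sub>R w) = (t' - t) *\<^sub>R w"
      by (simp add: algebra_simps)
    ultimately show False using assms(2) \<open>t \<noteq> t'\<close> by simp
  qed
  define f where "f x = (THE t. x - t *\<^sub>R w \<in> S)" for x
  have f_mem: "x - f x *\<^sub>R w \<in> S" for x
  proof -
    obtain t where "x - t *\<^sub>R w \<in> S" using codim_one_decompose[OF assms] .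
    then have "\<exists>!t. x - t *\<^sub>R w \<in> S" using unique by blast
    then show ?thesis unfolding f_def by (rule theI')
  qed
  have f_eq: "f x = t" if "x - t *\<^sub>R w \<in> S" for x t
    using unique[OF f_mem that] .
  have "linear f"
  proof (rule linearI)
    fix x y and c :: real
    show "f (x + y) = f x + f y"
      using subspace_add[OF sub f_mem[of x] f_mem[of y]] by (intro f_eq) (simp add: algebra_simps)
    show "f (c *\<^sub>R x) = c *\<^sub>R f x"
      using subspace_scale[OF sub f_mem[of x], of c] by (intro f_eq) (simp add: algebra_simps)
  qed
  moreover have "f w = 1" using f_eq[of w 1] subspace_0[OF sub] by simp
  moreover have "S = {x. f x = 0}"
  proof (intro set_eqI)
    show "x \<in> S \<longleftrightarrow> x \<in> {x. f x = 0}" for x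
      using f_eq[of x 0] f_mem[of x] by auto
  qed
  ultimately show ?thesis using that by blast
qed

lemma infdist_coefficient_bound:
  fixes S :: "'a::real_normed_vector set"
  assumes "subspace S" "z - t *\<^sub>R w \<in> S"
  shows "\<bar>t\<bar> * infdist w S \<le> norm z"
proof (cases "t = 0")
  case False
  have "(- (1/t)) *\<^sub>R (z - t *\<^sub>R w) \<in> S" using assms by (metis subspace_scale)
  moreover have "(- (1/t)) *\<^sub>R (z - t *\<^sub>R w) = w - (1/t) *\<^sub>R z"
    using False by (simp add: algebra_simps)
  ultimately have "infdist w S \<le> dist w (w - (1/t) *\<^sub>R z)"
    by (metis infdist_le)
  also have "\<dots> = norm z / \<bar>t\<bar>" by (simp add: dist_norm divide_inverse mult.commute)
  finally show ?thesis using False by (simp add: field_simps)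
qed simp

lemma closed_codim_one_eq_kernel:
  fixes S :: "'a::real_normed_vector set"
  assumes "closed S" "codim_one S" "w \<notin> S"
  obtains f :: "'a \<Rightarrow> real" where "bounded_linear f" "f w = 1" "S = {x. f x = 0}"
proof -
  obtain f :: "'a \<Rightarrow> real" where f: "linear f" "f w = 1" "S = {x. f x = 0}"
    by (rule codim_one_eq_kernel[OF assms(2,3)])
  have sub: "subspace S" using assms(2) unfolding codim_one_def by blast
  define d where "d = infdist w S"
  have "d > 0"
    unfolding d_def using subspace_0[OF sub] by (intro infdist_pos_not_in_closed assms(1,3)) auto
  have "\<bar>f x\<bar> * d \<le> norm x" for x
  proof -
    have "x - f x *\<^sub>R w \<in> S" using f(1,2) by (simp add: f(3) linear_diff linear_scale)
    then show ?thesis unfolding d_def by (rule infdist_coefficient_bound[OF sub])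
  qed
  then have "norm (f x) \<le> norm x * (1 / d)" for x
    using \<open>d > 0\<close> by (simp add: field_simps)
  then have "bounded_linear f"
    by (intro bounded_linear_intro linear_add[OF f(1)] linear_scale[OF f(1)])
  with f(2,3) show ?thesis using that by blast
qed

lemma subspace_closure:
  fixes S :: "'a::real_normed_vector set"
  assumes "subspace S"
  shows "subspace (closure S)"
proof -
  have "(\<lambda>(x, y). x + y) ` (S \<times> S) \<subseteq> closure S"
    using subspace_add[OF assms] closure_subset by fastforce
  then have add: "(\<lambda>(x, y). x + y) ` closure (S \<times> S) \<subseteq> closure S"
    by (intro image_closure_subset) (auto simp: case_prod_unfold intro!: continuous_intros)
  have "(\<lambda>x. c *\<^sub>R x) ` S \<subseteq> closure S" for c
    using subspace_scale[OF assms] closure_subset by fastforce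
  then have scale: "(\<lambda>x. c *\<^sub>R x) ` closure S \<subseteq> closure S" for c
    by (intro image_closure_subset) (auto intro!: continuous_intros)
  have "x + y \<in> closure S" if "x \<in> closure S" "y \<in> closure S" for x y
    using add that by (auto simp: closure_Times)
  moreover have "c *\<^sub>R x \<in> closure S" if "x \<in> closure S" for c x
    using scale that by blast
  ultimately show ?thesis
    unfolding subspace_def using closure_subset subspace_0[OF assms] by blast
qed

lemma dense_range_continuous_eq_zero:
  fixes g :: "'a::topological_space \<Rightarrow> 'b::{zero, t1_space}"
  assumes "closure (range i) = UNIV" "continuous_on UNIV g" "\<And>h. g (i h) = 0"
  shows "g x = 0"
  using continuous_constant_on_closure[of "range i" g 0 x] assms by auto

lemma closure_image_kernel_dense_range:
  fixes i :: "'a::real_vector \<Rightarrow> 'b::real_normed_vector" and g :: "'b \<Rightarrow> real"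
  assumes "linear i" "closure (range i) = UNIV" "bounded_linear g"
  shows "closure (i ` {h. g (i h) = 0}) = {x. g x = 0}"
proof (cases "\<exists>h. g (i h) \<noteq> 0")
  case False
  then have "g x = 0" for x
    using dense_range_continuous_eq_zero[OF assms(2) linear_continuous_on[OF assms(3)]] by blast
  with False assms(2) show ?thesis by simp
next
  case True
  have gi: "linear (\<lambda>h. g (i h))"
    using linear_compose[OF assms(1) bounded_linear.linear[OF assms(3)]] by (simp add: o_def)
  obtain h0 where "g (i h0) \<noteq> 0" using True by blast
  define u where "u = (1 / g (i h0)) *\<^sub>R h0"
  have "g (i u) = 1" using \<open>g (i h0) \<noteq> 0\<close> by (simp add: u_def linear_scale[OF gi])
  \<comment> \<open>The projection onto \<open>{x. g x = 0}\<close> along \<open>i u\<close> maps the dense set \<open>range i\<close> into \<open>i ` {h. g (i h) = 0}\<close>.\<close>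
  define \<phi> where "\<phi> x = x - g x *\<^sub>R i u" for x
  have "\<phi> ` closure (range i) \<subseteq> closure (i ` {h. g (i h) = 0})"
  proof (rule image_closure_subset)
    show "continuous_on (closure (range i)) \<phi>"
      unfolding \<phi>_def using linear_continuous_on[OF assms(3)]
      by (intro continuous_intros) (auto intro: continuous_on_subset)
    have "\<phi> (i h) = i (h - g (i h) *\<^sub>R u)" for h
      by (simp add: \<phi>_def linear_diff[OF assms(1)] linear_scale[OF assms(1)])
    moreover have "g (i (h - g (i h) *\<^sub>R u)) = 0" for h
      using \<open>g (i u) = 1\<close> by (simp add: linear_diff[OF gi] linear_scale[OF gi])
    ultimately show "\<phi> ` range i \<subseteq> closure (i ` {h. g (i h) = 0})"
      using closure_subset by fastforce
  qed simp
  moreover have "x \<in> \<phi> ` closure (range i)" if "g x = 0" for x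
    using that assms(2) image_eqI[of x \<phi> x] by (simp add: \<phi>_def)
  ultimately have "{x. g x = 0} \<subseteq> closure (i ` {h. g (i h) = 0})"
    by blast
  moreover have "closed {x. g x = 0}"
    using closed_Collect_eq[OF linear_continuous_on[OF assms(3)] continuous_on_const] .
  then have "closure (i ` {h. g (i h) = 0}) \<subseteq> {x. g x = 0}"
    by (rule closure_minimal[rotated]) auto
  ultimately show ?thesis by blast
qed

lemma lipschitz_on_range_comp_inv:
  fixes i :: "'a::real_normed_vector \<Rightarrow> 'b::real_normed_vector"
    and f :: "'a \<Rightarrow> 'c::real_normed_vector"
  assumes "linear i" "inj i" "linear f" "0 \<le> C" "\<And>h. norm (f h) \<le> C * norm (i h)"
  shows "C-lipschitz_on (range i) (f \<circ> inv i)"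
proof (rule lipschitz_onI)
  fix x y assume "x \<in> range i" "y \<in> range i"
  then obtain a b where "x = i a" "y = i b" by blast
  then show "dist ((f \<circ> inv i) x) ((f \<circ> inv i) y) \<le> C * dist x y"
    using assms(5)[of "a - b"]
    by (simp add: inv_f_f[OF assms(2)] dist_norm linear_diff[OF assms(1)] linear_diff[OF assms(3)])
qed fact

lemma continuous_on_range_comp_inv_bound:
  fixes i :: "'a::real_normed_vector \<Rightarrow> 'b::real_normed_vector"
    and f :: "'a \<Rightarrow> 'c::real_normed_vector"
  assumes "linear i" "inj i" "linear f" "continuous_on (range i) (f \<circ> inv i)"
  obtains C where "0 \<le> C" "\<And>h. norm (f h) \<le> C * norm (i h)"
proof -
  have inv0: "inv i 0 = 0" using inv_f_f[OF assms(2), of 0] by (simp add: linear_0[OF assms(1)])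
  have "i 0 \<in> range i" by simp
  then obtain \<delta> where "\<delta> > 0" and
    "\<forall>y\<in>range i. dist y (i 0) < \<delta> \<longrightarrow> dist ((f \<circ> inv i) y) ((f \<circ> inv i) (i 0)) < 1"
    using assms(4) unfolding continuous_on_iff by (meson zero_less_one)
  then have \<delta>: "norm (f h) < 1" if "norm (i h) < \<delta>" for h
    using that
    by (auto simp: inv_f_f[OF assms(2)] inv0 dist_norm linear_0[OF assms(1)] linear_0[OF assms(3)])
  have bound: "norm (f h) \<le> (2 / \<delta>) * norm (i h)" for h
  proof (cases "i h = 0")
    case True
    then have "h = 0" using assms(2) linear_0[OF assms(1)] by (metis injD)
    then show ?thesis by (simp add: linear_0[OF assms(1)] linear_0[OF assms(3)])
  next
    case False
    define s where "s = \<delta> / (2 * norm (i h))"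
    have "s > 0" using False \<open>\<delta> > 0\<close> by (simp add: s_def)
    have "norm (i (s *\<^sub>R h)) < \<delta>"
      using False \<open>\<delta> > 0\<close> by (simp add: s_def linear_scale[OF assms(1)])
    then have "s * norm (f h) < 1"
      using \<delta> \<open>s > 0\<close> by (fastforce simp: linear_scale[OF assms(3)])
    then have "norm (f h) < 1 / s" using \<open>s > 0\<close> by (simp add: field_simps)
    also have "1 / s = (2 / \<delta>) * norm (i h)" by (simp add: s_def)
    finally show ?thesis by simp
  qed
  with \<open>\<delta> > 0\<close> show ?thesis by (intro that[of "2 / \<delta>"] bound) simp
qed

lemma linear_if_linear_on_dense_range:
  fixes i :: "'a::real_vector \<Rightarrow> 'b::real_normed_vector" and F :: "'b \<Rightarrow> 'c::real_normed_vector"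
  assumes "linear i" "closure (range i) = UNIV" "continuous_on UNIV F" "linear (F \<circ> i)"
  shows "linear F"
proof -
  have F_add: "F (i a + i b) = F (i a) + F (i b)" for a b
    using linear_add[OF assms(4)] by (simp add: linear_add[OF assms(1), symmetric])
  have F_scale: "F (c *\<^sub>R i a) = c *\<^sub>R F (i a)" for c a
    using linear_scale[OF assms(4)] by (simp add: linear_scale[OF assms(1), symmetric])
  have cont: "continuous_on UNIV (\<lambda>x. F (x + y))" "continuous_on UNIV (\<lambda>x. F (y + x))"
    "continuous_on UNIV (\<lambda>x. F (c *\<^sub>R x))" for y c
    by (auto intro!: continuous_on_compose2[OF assms(3)] continuous_intros)
  have add_right: "F (x + i b) = F x + F (i b)" for x b
  proof -
    have "continuous_on UNIV (\<lambda>x. F (x + i b) - F x - F (i b))"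
      using cont(1) assms(3) by (intro continuous_intros)
    then have "F (x + i b) - F x - F (i b) = 0"
      by (rule dense_range_continuous_eq_zero[OF assms(2)]) (simp add: F_add)
    then show ?thesis by (simp add: algebra_simps)
  qed
  show ?thesis
  proof (rule linearI)
    fix x y
    have "continuous_on UNIV (\<lambda>y. F (x + y) - F x - F y)"
      using cont(2) assms(3) by (intro continuous_intros)
    then have "F (x + y) - F x - F y = 0"
      by (rule dense_range_continuous_eq_zero[OF assms(2)]) (simp add: add_right)
    then show "F (x + y) = F x + F y" by (simp add: algebra_simps)
  next
    fix c x
    have "continuous_on UNIV (\<lambda>x. F (c *\<^sub>R x) - c *\<^sub>R F x)"
      using cont(3) assms(3) by (intro continuous_intros)
    then have "F (c *\<^sub>R x) - c *\<^sub>R F x = 0"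
      by (rule dense_range_continuous_eq_zero[OF assms(2)]) (simp add: F_scale)
    then show "F (c *\<^sub>R x) = c *\<^sub>R F x" by simp
  qed
qed

lemma bounded_linear_extension_dense_range:
  fixes i :: "'a::real_normed_vector \<Rightarrow> 'b::real_normed_vector" and f :: "'a \<Rightarrow> 'c::banach"
  assumes "linear i" "inj i" "closure (range i) = UNIV" "linear f"
    and "continuous_on (range i) (f \<circ> inv i)"
  obtains F where "bounded_linear F" "\<And>h. F (i h) = f h"
proof -
  obtain C where C: "0 \<le> C" "\<And>h. norm (f h) \<le> C * norm (i h)"
    using continuous_on_range_comp_inv_bound[OF assms(1,2,4,5)] by blast
  obtain F where F: "C-lipschitz_on UNIV F" "\<And>h. F (i h) = f h"
    using lipschitz_extend_closure[OF lipschitz_on_range_comp_inv[OF assms(1,2,4) C]]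
    by (auto simp: assms(3) inv_f_f[OF assms(2)])
  have "linear F"
    using linear_if_linear_on_dense_range[OF assms(1,3) lipschitz_on_continuous_on[OF F(1)]]
      assms(4) F(2) by (simp add: o_def)
  moreover have "norm (F x) \<le> norm x * C" for x
    using lipschitz_onD[OF F(1), of x 0] F(2)[of 0]
    by (simp add: linear_0[OF assms(1)] linear_0[OF assms(4)] mult.commute)
  ultimately have "bounded_linear F"
    by (intro bounded_linear_intro) (auto simp: linear_add linear_scale)
  with F(2) show ?thesis using that by blast
qed

lemma closed_codim_one_vimage_dense_range:
  fixes i :: "'a::real_normed_vector \<Rightarrow> 'b::real_normed_vector"
  assumes "bounded_linear i" "closure (range i) = UNIV" "closed L" "codim_one L"
  shows "closed (i -` L) \<and> codim_one (i -` L) \<and> closure (i ` (i -` L)) = L"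
proof -
  have lin: "linear i" using assms(1) by (rule bounded_linear.linear)
  obtain w where "w \<notin> L" using assms(4) unfolding codim_one_def by blast
  then obtain g :: "'b \<Rightarrow> real" where g: "bounded_linear g" "L = {x. g x = 0}"
    using closed_codim_one_eq_kernel[OF assms(3,4)] by metis
  have vimage: "i -` L = {h. g (i h) = 0}" using g(2) by auto
  have "\<not> range i \<subseteq> L"
    using closure_minimal[OF _ assms(3)] assms(2) \<open>w \<notin> L\<close> by blast
  then obtain h0 where "g (i h0) \<noteq> 0" using g(2) by auto
  have "linear (\<lambda>h. g (i h))"
    using linear_compose[OF lin bounded_linear.linear[OF g(1)]] by (simp add: o_def)
  then have "codim_one (i -` L)"
    unfolding vimage using \<open>g (i h0) \<noteq> 0\<close> by (rule codim_one_kernel)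
  moreover have "closed (i -` L)"
    using continuous_closed_vimage[OF assms(3)] linear_continuous_at[OF assms(1)] by blast
  moreover have "closure (i ` (i -` L)) = L"
    unfolding g(2) using closure_image_kernel_dense_range[OF lin assms(2) g(1)]
    by (simp add: vimage_def)
  ultimately show ?thesis by blast
qed

lemma codim_one_eq_vimage_closure_image:
  fixes i :: "'a::real_vector \<Rightarrow> 'b::real_normed_vector"
  assumes "linear i" "closure (range i) = UNIV" "codim_one M" "closure (i ` M) \<noteq> UNIV"
  shows "M = i -` closure (i ` M)"
proof (rule codim_one_maximal[OF assms(3)])
  have "subspace M" using assms(3) unfolding codim_one_def by blast
  then show "subspace (i -` closure (i ` M))"
    by (intro linear_subspace_vimage[OF assms(1)] subspace_closure linear_subspace_image[OF assms(1)])
  show "M \<subseteq> i -` closure (i ` M)" using closure_subset[of "i ` M"] by blast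
  show "i -` closure (i ` M) \<noteq> UNIV"
  proof
    assume "i -` closure (i ` M) = UNIV"
    then have "closure (range i) \<subseteq> closure (i ` M)" by (intro closure_minimal) auto
    with assms(2,4) show False by blast
  qed
qed

lemma codim_one_closure_image_kernel:
  fixes i :: "'a::real_normed_vector \<Rightarrow> 'b::banach" and f :: "'a \<Rightarrow> real"
  assumes "linear i" "inj i" "closure (range i) = UNIV" "linear f" "f \<noteq> (\<lambda>_. 0)"
    and "continuous_on (range i) (f \<circ> inv i)"
  shows "codim_one (closure (i ` {h. f h = 0}))"
proof -
  obtain F :: "'b \<Rightarrow> real" where F: "bounded_linear F" "\<And>h. F (i h) = f h"
    using bounded_linear_extension_dense_range[OF assms(1-4,6)] by metis
  obtain h0 where "f h0 \<noteq> 0" using assms(5) by blast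
  have "closure (i ` {h. f h = 0}) = {x. F x = 0}"
    using closure_image_kernel_dense_range[OF assms(1,3) F(1)] by (simp add: F(2))
  then show ?thesis
    using codim_one_kernel[OF bounded_linear.linear[OF F(1)], of "i h0"] F(2) \<open>f h0 \<noteq> 0\<close> by simp
qed

lemma closure_image_kernel_eq_UNIV:
  fixes i :: "'a::real_normed_vector \<Rightarrow> 'b::real_normed_vector" and f :: "'a \<Rightarrow> real"
  assumes "linear i" "inj i" "closure (range i) = UNIV" "linear f"
    and "\<not> continuous_on (range i) (f \<circ> inv i)"
  shows "closure (i ` {h. f h = 0}) = UNIV"
proof -
  let ?K = "closure (i ` {h. f h = 0})"
  have sub: "subspace ?K"
    by (intro subspace_closure linear_subspace_image[OF assms(1)] linear_subspace_kernel[OF assms(4)])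
  obtain h0 where "f h0 \<noteq> 0"
  proof (rule ccontr)
    assume "\<not> thesis"
    then have "f \<circ> inv i = (\<lambda>_. 0)" using that by (auto simp: fun_eq_iff)
    with assms(5) show False by simp
  qed
  define u where "u = (1 / f h0) *\<^sub>R h0"
  have "f u = 1" using \<open>f h0 \<noteq> 0\<close> by (simp add: u_def linear_scale[OF assms(4)])
  have split: "i h - f h *\<^sub>R i u \<in> ?K" for h
  proof -
    have "i h - f h *\<^sub>R i u = i (h - f h *\<^sub>R u)"
      by (simp add: linear_diff[OF assms(1)] linear_scale[OF assms(1)])
    moreover have "f (h - f h *\<^sub>R u) = 0"
      using \<open>f u = 1\<close> by (simp add: linear_diff[OF assms(4)] linear_scale[OF assms(4)])
    ultimately show ?thesis using closure_subset by fastforce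
  qed
  have "i u \<in> ?K"
  proof (rule ccontr)
    \<comment> \<open>Otherwise \<open>i u\<close> keeps a positive distance from \<open>?K\<close>, which bounds \<open>f\<close> by the norm of \<open>i\<close>.\<close>
    assume "i u \<notin> ?K"
    moreover have "?K \<noteq> {}" using subspace_0[OF sub] by (metis empty_iff)
    ultimately have "infdist (i u) ?K > 0"
      by (simp add: infdist_pos_not_in_closed)
    have "\<bar>f h\<bar> * infdist (i u) ?K \<le> norm (i h)" for h
      by (rule infdist_coefficient_bound[OF sub split])
    with \<open>infdist (i u) ?K > 0\<close>
    have "norm (f h) \<le> (1 / infdist (i u) ?K) * norm (i h)" for h
      by (simp add: field_simps)
    with \<open>infdist (i u) ?K > 0\<close>
    have "(1 / infdist (i u) ?K)-lipschitz_on (range i) (f \<circ> inv i)"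
      by (intro lipschitz_on_range_comp_inv assms(1,2,4)) auto
    then have "continuous_on (range i) (f \<circ> inv i)"
      by (rule lipschitz_on_continuous_on)
    with assms(5) show False by contradiction
  qed
  have "i h \<in> ?K" for h
    using subspace_add[OF sub split[of h] subspace_scale[OF sub \<open>i u \<in> ?K\<close>, of "f h"]] by simp
  then have "closure (range i) \<subseteq> ?K" by (intro closure_minimal) auto
  with assms(3) show ?thesis by blast
qed

theorem proposition5p3:
  fixes i :: "'h::{real_inner, complete_space} \<Rightarrow> 'b::banach"
  assumes incl_lin_cont: "bounded_linear i"
    and incl_inj: "inj i"
    and dense: "closure (range i) = UNIV"
  shows
    "(\<forall>L::'b set. closed L \<and> codim_one L \<longrightarrow>
        (closed (i -` L) \<and> codim_one (i -` L) \<and> closure (i ` (i -` L)) = L) \<and>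
        (\<forall>M::'h set. closed M \<and> codim_one M \<and> closure (i ` M) = L \<longrightarrow> M = i -` L))
     \<and>
     (\<forall>f0::'h \<Rightarrow> real. bounded_linear f0 \<and> f0 \<noteq> (\<lambda>_. 0) \<longrightarrow>
        (continuous_on (range i) (f0 \<circ> inv i) \<longrightarrow> codim_one (closure (i ` {h. f0 h = 0}))) \<and>
        (\<not> continuous_on (range i) (f0 \<circ> inv i) \<longrightarrow> closure (i ` {h. f0 h = 0}) = UNIV))"
proof -
  have lin: "linear i" using incl_lin_cont by (rule bounded_linear.linear)
  have unique: "M = i -` L" if "codim_one L" "codim_one M" "closure (i ` M) = L" for L M
  proof -
    have "L \<noteq> UNIV" using \<open>codim_one L\<close> unfolding codim_one_def by blast
    then show ?thesis
      using codim_one_eq_vimage_closure_image[OF lin dense \<open>codim_one M\<close>] that(3) by simp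
  qed
  show ?thesis
  proof ((rule conjI; intro allI impI), goal_cases)
    case (1 L)
    then show ?case
      using closed_codim_one_vimage_dense_range[OF incl_lin_cont dense, of L] unique[of L] by blast
  next
    case (2 f0)
    then show ?case
      using codim_one_closure_image_kernel[OF lin incl_inj dense bounded_linear.linear, of f0]
        closure_image_kernel_eq_UNIV[OF lin incl_inj dense bounded_linear.linear, of f0]
      by blast
  qed
qed

end
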